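(* Let $H = -\Delta + V$ on $\ell^2(\mathbb{Z}^d)$, with $V$ a real-valued potential, and let $E$ be an eigenvalue of $H$ having two linearly independent eigenfunctions $\varphi_1,\varphi_2\in\ell^2(\mathbb{Z}^d)$, each with $\beta$-decay for some $\beta > \frac d2$. Then there exists a constant $C = C_{d,\beta,\varphi_1,\varphi_2}<\infty$ (depending only on $d,\beta,\varphi_1,\varphi_2$) such that, setting $\varepsilon_L = C L^{-\beta+\frac d2}$ and $J_L = [E-\varepsilon_L, E+\varepsilon_L]$, we have $\operatorname{tr}\chi_{J_L}(H_L)\ge 2$ for all sufficiently large $L$.
   Context: $\Delta(x,y)=1$ if $|x-y|=1$ and $\Delta(x,y)=0$ otherwise; $V$ acts by multiplication. Write $\langle x\rangle=\sqrt{1+|x|^2}$; $\varphi\in\ell^2(\mathbb{Z}^d)$ has $\beta$-decay if $|\varphi(x)|\le C_\varphi\langle x\rangle^{-\beta}$ for all $x$ and some $C_\varphi<\infty$. For $L>0$, $\Lambda_L$ is the open box in $\mathbb{Z}^d$ centered at the origin with side of length $L$, $\chi_L$ its characteristic function, and $H_L=\chi_L H\chi_L$ is the restriction of $H$ to $\ell^2(\Lambda_L)$ with zero boundary conditions outside $\Lambda_L$ (identifying $\ell^2(\Lambda_L)$ with $\chi_L\ell^2(\mathbb{Z}^d)$). For a set $J$, $\chi_J$ denotes its characteristic function, so $\chi_J(H_L)$ is the spectral projection of $H_L$ onto $J$. *)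

theory Defs
  imports "HOL-Analysis.Analysis" "HOL-Library.Function_Algebras"
begin

text \<open>Points of Z^d are integer vectors of type int ^ 'd, with d = CARD('d).\<close>

definition znorm :: "int ^ 'd \<Rightarrow> real" where
  "znorm x = sqrt (\<Sum>i\<in>UNIV. (real_of_int (x $ i))^2)"

definition jbr :: "int ^ 'd \<Rightarrow> real" where
  "jbr x = sqrt (1 + (znorm x)^2)"

definition adj :: "int ^ 'd \<Rightarrow> int ^ 'd \<Rightarrow> bool" where
  "adj x y \<longleftrightarrow> znorm (x - y) = 1"

definition Hop :: "(int ^ 'd \<Rightarrow> real) \<Rightarrow> (int ^ 'd \<Rightarrow> complex) \<Rightarrow> int ^ 'd \<Rightarrow> complex" where
  "Hop V f x = - (\<Sum>y | adj x y. f y) + complex_of_real (V x) * f x"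

definition l2 :: "(int ^ 'd \<Rightarrow> complex) \<Rightarrow> bool" where
  "l2 f \<longleftrightarrow> (\<lambda>x. (norm (f x))^2) summable_on UNIV"

definition has_decay :: "real \<Rightarrow> (int ^ 'd \<Rightarrow> complex) \<Rightarrow> bool" where
  "has_decay \<beta> f \<longleftrightarrow> (\<exists>C. \<forall>x. norm (f x) \<le> C * jbr x powr (- \<beta>))"

definition box_L :: "real \<Rightarrow> (int ^ 'd) set" where
  "box_L L = {x. \<forall>i. 2 * \<bar>real_of_int (x $ i)\<bar> < L}"

definition chi :: "'a set \<Rightarrow> ('a \<Rightarrow> complex) \<Rightarrow> 'a \<Rightarrow> complex" where
  "chi A f x = (if x \<in> A then f x else 0)"

definition H_L :: "(int ^ 'd \<Rightarrow> real) \<Rightarrow> real \<Rightarrow> (int ^ 'd \<Rightarrow> complex) \<Rightarrow> int ^ 'd \<Rightarrow> complex" where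
  "H_L V L f = chi (box_L L) (Hop V (chi (box_L L) f))"

definition fscale :: "complex \<Rightarrow> ('a \<Rightarrow> complex) \<Rightarrow> 'a \<Rightarrow> complex" where
  "fscale c f = (\<lambda>x. c * f x)"

text \<open>tr chi_J(H_L): the rank (= trace) of the spectral projection of the self-adjoint
  operator H_L on l^2(Lambda_L) onto J, i.e. the dimension of the span of all eigenvectors of
  H_L in l^2(Lambda_L) with eigenvalue in J (the range of chi_J(H_L)).\<close>
definition tr_spec_proj :: "(int ^ 'd \<Rightarrow> real) \<Rightarrow> real \<Rightarrow> real set \<Rightarrow> nat" where
  "tr_spec_proj V L J =
     vector_space.dim fscale
       (module.span fscale
         {f. (\<forall>x. x \<notin> box_L L \<longrightarrow> f x = 0) \<and> f \<noteq> 0 \<and>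
             (\<exists>e\<in>J. H_L V L f = fscale (complex_of_real e) f)})"

end

theory Submission
  imports Defs "HOL-Computational_Algebra.Fundamental_Theorem_Algebra"
begin

text \<open>Truncating an eigenfunction \<phi> of H to the box changes H \<phi> = E \<phi> only through the
  hopping terms across the boundary of the box, where \<beta>-decay makes \<phi> of size L^(-\<beta>);
  summing over the O(L^d) sites of the box gives ||(H_L - E) \<chi>_L \<phi>|| \<le> C L^(d/2 - \<beta>) ||\<chi>_L \<phi>||
  uniformly on the plane spanned by \<chi>_L \<phi>1 and \<chi>_L \<phi>2, because once the box contains two
  points at which \<phi>1, \<phi>2 are independent the norm of a truncated combination controls its
  coefficients. Expanding in an orthonormal eigenbasis of the Hermitian matrix H_L, a nonzero
  vector of that plane orthogonal to the (at most one) eigenvectors with eigenvalue in J_L would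
  violate this bound, so H_L has at least two of them.\<close>

section \<open>Functions on a finite set as a Hilbert space\<close>

interpretation FS: vector_space "fscale :: complex \<Rightarrow> ('a \<Rightarrow> complex) \<Rightarrow> 'a \<Rightarrow> complex"
  by unfold_locales (auto simp: fscale_def fun_eq_iff algebra_simps)

lemma fscale_apply [simp]: "fscale c f x = c * f x"
  by (simp add: fscale_def)

lemma fscale_zero [simp]: "fscale 0 f = 0" "fscale c 0 = 0"
  by (auto simp: fun_eq_iff)

lemma sum_fun_apply: "(\<Sum>i\<in>I. F i) x = (\<Sum>i\<in>I. F i x)"
  by (induction I rule: infinite_finite_induct) auto

definition supported_on :: "'a set \<Rightarrow> ('a \<Rightarrow> complex) set" where
  "supported_on B = {f. \<forall>x. x \<notin> B \<longrightarrow> f x = 0}"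

definition inner_on :: "'a set \<Rightarrow> ('a \<Rightarrow> complex) \<Rightarrow> ('a \<Rightarrow> complex) \<Rightarrow> complex" where
  "inner_on B f g = (\<Sum>x\<in>B. cnj (f x) * g x)"

definition sqnorm_on :: "'a set \<Rightarrow> ('a \<Rightarrow> complex) \<Rightarrow> real" where
  "sqnorm_on B f = (\<Sum>x\<in>B. (cmod (f x))\<^sup>2)"

lemma subspace_supported_on: "FS.subspace (supported_on B)"
  unfolding FS.subspace_def by (auto simp: supported_on_def)

lemma cnj_mult_self: "cnj z * z = (complex_of_real (cmod z))\<^sup>2"
  by (metis complex_norm_square mult.commute of_real_power)

lemma inner_on_self: "inner_on B f f = complex_of_real (sqnorm_on B f)"
  unfolding inner_on_def sqnorm_on_def of_real_sum by (simp add: cnj_mult_self)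

lemma sqnorm_on_nonneg: "sqnorm_on B f \<ge> 0"
  unfolding sqnorm_on_def by (intro sum_nonneg) auto

lemma inner_on_zero_right [simp]: "inner_on B f 0 = 0"
  by (simp add: inner_on_def)

lemma inner_on_add_right: "inner_on B f (g + h) = inner_on B f g + inner_on B f h"
  by (simp add: inner_on_def algebra_simps sum.distrib)

lemma inner_on_diff_right: "inner_on B f (g - h) = inner_on B f g - inner_on B f h"
  by (simp add: inner_on_def algebra_simps sum_subtractf)

lemma inner_on_scale_right: "inner_on B f (fscale c g) = c * inner_on B f g"
  by (simp add: inner_on_def sum_distrib_left algebra_simps)

lemma inner_on_scale_left: "inner_on B (fscale c g) f = cnj c * inner_on B g f"
  by (simp add: inner_on_def sum_distrib_left algebra_simps)

lemma inner_on_sum_right: "inner_on B f (\<Sum>i\<in>I. G i) = (\<Sum>i\<in>I. inner_on B f (G i))"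
  by (simp add: inner_on_def sum_fun_apply sum_distrib_left sum.swap[of _ B])

lemma inner_on_sum_left: "inner_on B (\<Sum>i\<in>I. G i) f = (\<Sum>i\<in>I. inner_on B (G i) f)"
  by (simp add: inner_on_def sum_fun_apply sum_distrib_right sum.swap[of _ B])

lemma cnj_inner_on: "cnj (inner_on B f g) = inner_on B g f"
  by (simp add: inner_on_def mult.commute)

lemma sqnorm_on_pos:
  assumes "finite B" "f \<in> supported_on B" "f \<noteq> 0"
  shows "sqnorm_on B f > 0"
proof -
  obtain x where "f x \<noteq> 0" using assms(3) by (auto simp: fun_eq_iff)
  then have "x \<in> B" "(cmod (f x))\<^sup>2 > 0" using assms(2) by (auto simp: supported_on_def)
  then show ?thesis
    unfolding sqnorm_on_def using assms(1) by (intro sum_pos2) auto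
qed

lemma supported_on_finite_span:
  assumes "finite B"
  obtains T where "finite T" "card T \<le> card B" "supported_on B \<subseteq> FS.span T"
proof
  let ?T = "(\<lambda>x y. if y = x then 1 else 0) ` B"
  show "finite ?T" "card ?T \<le> card B" using assms by (auto intro: card_image_le)
  show "supported_on B \<subseteq> FS.span ?T"
  proof
    fix f assume f: "f \<in> supported_on B"
    have "f = (\<Sum>x\<in>B. fscale (f x) (\<lambda>y. if y = x then 1 else 0))"
      using f assms by (auto simp: fun_eq_iff sum_fun_apply supported_on_def if_distrib cong: if_cong)
    also have "\<dots> \<in> FS.span ?T"
      by (intro FS.span_sum FS.span_scale FS.span_base) auto
    finally show "f \<in> FS.span ?T" .
  qed
qed

lemma independent_supported_on_card_le:
  assumes "finite B" "FS.independent S" "S \<subseteq> supported_on B"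
  shows "finite S \<and> card S \<le> card B"
proof -
  obtain T where "finite T" "card T \<le> card B" "supported_on B \<subseteq> FS.span T"
    using supported_on_finite_span[OF assms(1)] .
  moreover from this assms(3) have "S \<subseteq> FS.span T" by blast
  ultimately show ?thesis using FS.independent_span_bound[OF _ assms(2), of T] by auto
qed

lemma (in vector_space) card_le_dim_of_finite_span:
  assumes "finite T" "V \<subseteq> span T" "independent S" "S \<subseteq> V"
  shows "card S \<le> dim V"
proof -
  obtain C where C: "C \<subseteq> V" "independent C" "V \<subseteq> span C" "card C = dim V"
    using basis_exists by blast
  have "finite C"
    using independent_span_bound[OF assms(1) C(2)] C(1) assms(2) by blast
  then show ?thesis
    using independent_span_bound[OF _ assms(3), of C] C(3,4) assms(4) by auto
qed

lemma (in vector_space) family_dependent: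
  assumes "finite T" "\<And>k. k \<le> n \<Longrightarrow> X k \<in> span T" "card T \<le> n"
  obtains c where "\<exists>k\<le>n. c k \<noteq> 0" "(\<Sum>k\<le>n. scale (c k) (X k)) = 0"
proof (cases "inj_on X {..n}")
  case True
  have "\<not> independent (X ` {..n})"
    using independent_span_bound[OF assms(1)] assms(2,3) card_image[OF True] by fastforce
  then obtain u where u: "\<exists>v\<in>X ` {..n}. u v \<noteq> 0" "(\<Sum>v\<in>X ` {..n}. scale (u v) v) = 0"
    using dependent_finite[of "X ` {..n}"] by blast
  have "(\<Sum>k\<le>n. scale (u (X k)) (X k)) = 0"
    using u(2) by (simp add: sum.reindex[OF True])
  then show ?thesis using u(1) that[of "u \<circ> X"] by auto
next
  case False
  then obtain i j where ij: "i \<le> n" "j \<le> n" "i \<noteq> j" "X i = X j"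
    unfolding inj_on_def by auto
  let ?c = "\<lambda>k. if k = i then 1 else if k = j then -1 else 0"
  have "(\<Sum>k\<le>n. scale (?c k) (X k)) = (\<Sum>k\<le>n. (if k = i then X i else 0) - (if k = j then X j else 0))"
    using ij(3) by (intro sum.cong) auto
  also have "\<dots> = 0" using ij by (simp add: sum_subtractf)
  finally show ?thesis using ij(1) that[of ?c] by fastforce
qed


lemma exists_combination_orthogonal:
  assumes "finite K" "card K \<le> 1"
  obtains a b :: complex where "a \<noteq> 0 \<or> b \<noteq> 0" "\<forall>k\<in>K. inner_on B k (fscale a \<psi>1 + fscale b \<psi>2) = 0"
proof (cases "K = {}")
  case True
  then show ?thesis using that[of 1 0] by simp
next
  case False
  then obtain k where K: "K = {k}"
    using assms by (metis One_nat_def card_0_eq card_1_singletonE le_Suc_eq le_zero_eq)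
  define x y where "x = inner_on B k \<psi>1" and "y = inner_on B k \<psi>2"
  have inner: "inner_on B k (fscale a \<psi>1 + fscale b \<psi>2) = a * x + b * y" for a b
    by (simp add: inner_on_add_right inner_on_scale_right x_def y_def)
  show ?thesis
  proof (cases "x = 0 \<and> y = 0")
    case True
    then show ?thesis using that[of 1 0] K inner[of 1 0] by simp
  next
    case False
    moreover have "inner_on B k (fscale y \<psi>1 + fscale (-x) \<psi>2) = 0"
      using inner[of y "-x"] by (simp add: mult.commute)
    ultimately show ?thesis using that[of y "-x"] K by auto
  qed
qed

section \<open>Hermitian operators on functions on a finite set\<close>

locale hermitian_on =
  module_hom "fscale :: complex \<Rightarrow> ('a \<Rightarrow> complex) \<Rightarrow> 'a \<Rightarrow> complex" fscale A
  for A :: "('a \<Rightarrow> complex) \<Rightarrow> 'a \<Rightarrow> complex" +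
  fixes B :: "'a set"
  assumes finite_B: "finite B"
    and range_supported: "A f \<in> supported_on B"
    and self_adjoint: "f \<in> supported_on B \<Longrightarrow> g \<in> supported_on B \<Longrightarrow>
      inner_on B f (A g) = inner_on B (A f) g"
begin

definition poly_apply :: "complex poly \<Rightarrow> ('a \<Rightarrow> complex) \<Rightarrow> 'a \<Rightarrow> complex" where
  "poly_apply p f = (\<Sum>k\<le>degree p. fscale (coeff p k) ((A ^^ k) f))"

lemma poly_apply_upto:
  assumes "degree p \<le> N"
  shows "poly_apply p f = (\<Sum>k\<le>N. fscale (coeff p k) ((A ^^ k) f))"
  unfolding poly_apply_def
  by (rule sum.mono_neutral_left) (use assms in \<open>auto simp: coeff_eq_0\<close>)

lemma poly_apply_add: "poly_apply (p + q) f = poly_apply p f + poly_apply q f"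
proof -
  define N where "N = max (degree p) (degree q)"
  have "degree (p + q) \<le> N" unfolding N_def by (rule degree_add_le) auto
  then show ?thesis
    by (simp add: poly_apply_upto[of _ N] N_def sum.distrib[symmetric] algebra_simps fun_eq_iff sum_fun_apply)
qed

lemma poly_apply_smult: "poly_apply (smult c p) f = fscale c (poly_apply p f)"
  by (simp add: poly_apply_upto[of _ "degree p"] sum_fun_apply fun_eq_iff sum_distrib_left algebra_simps)

lemma poly_apply_pCons_0: "poly_apply (pCons 0 p) f = A (poly_apply p f)"
proof -
  have "poly_apply (pCons 0 p) f = (\<Sum>k\<le>Suc (degree p). fscale (coeff (pCons 0 p) k) ((A ^^ k) f))"
    by (rule poly_apply_upto) (simp add: degree_pCons_le)
  also have "\<dots> = (\<Sum>k\<le>degree p. fscale (coeff p k) ((A ^^ Suc k) f))"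
    by (subst sum.atMost_Suc_shift) simp
  also have "\<dots> = A (poly_apply p f)"
    unfolding poly_apply_def sum by (simp add: scale)
  finally show ?thesis .
qed

lemma poly_apply_linear_factor:
  "poly_apply ([:-x, 1:] * q) f = A (poly_apply q f) - fscale x (poly_apply q f)"
proof -
  have "[:-x, 1:] * q = pCons 0 q + smult (-x) q"
    by (simp add: algebra_simps)
  then have "poly_apply ([:-x, 1:] * q) f = A (poly_apply q f) + fscale (-x) (poly_apply q f)"
    by (simp only: poly_apply_add poly_apply_smult poly_apply_pCons_0)
  then show ?thesis by (simp add: fun_eq_iff)
qed

lemma funpow_in_invariant: "A ` U \<subseteq> U \<Longrightarrow> f \<in> U \<Longrightarrow> (A ^^ k) f \<in> U"
  by (induction k) auto

lemma poly_apply_in_invariant: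
  assumes "FS.subspace U" "A ` U \<subseteq> U" "f \<in> U"
  shows "poly_apply p f \<in> U"
  unfolding poly_apply_def
  by (intro FS.subspace_sum FS.subspace_scale assms(1) funpow_in_invariant[OF assms(2,3)])

lemma eigenvector_of_annihilating_product:
  assumes U: "FS.subspace U" "A ` U \<subseteq> U"
  shows "v \<in> U \<Longrightarrow> poly_apply (\<Prod>x\<in>#M. [:-x, 1:]) v = 0 \<Longrightarrow> v \<noteq> 0 \<Longrightarrow>
     \<exists>u\<in>U. u \<noteq> 0 \<and> (\<exists>\<mu>. A u = fscale \<mu> u)"
proof (induction M)
  case empty
  then show ?case by (simp add: poly_apply_def)
next
  case (add x M)
  define w where "w = poly_apply (\<Prod>x\<in>#M. [:-x, 1:]) v"
  show ?case
  proof (cases "w = 0")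
    case True
    then show ?thesis using add unfolding w_def by blast
  next
    case False
    have "(\<Prod>x\<in>#add_mset x M. [:-x, 1:]) = [:-x, 1:] * (\<Prod>x\<in>#M. [:-x, 1:])"
      by simp
    then have "A w - fscale x w = 0"
      using add.prems(2) by (simp only: poly_apply_linear_factor w_def)
    moreover have "w \<in> U"
      unfolding w_def by (rule poly_apply_in_invariant[OF U add.prems(1)])
    ultimately show ?thesis using False by (metis right_minus_eq)
  qed
qed

text \<open>The vectors v, A v, ..., A^n v with n = card B are linearly dependent, so some nonzero
  polynomial annihilates v; over \<complex> it splits into linear factors, one of which has
  a nonzero kernel vector in U.\<close>

lemma invariant_subspace_has_eigenvector:
  assumes U: "FS.subspace U" "A ` U \<subseteq> U" "U \<subseteq> supported_on B" and v: "v \<in> U" "v \<noteq> 0"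
  shows "\<exists>u\<in>U. u \<noteq> 0 \<and> (\<exists>\<mu>. A u = fscale \<mu> u)"
proof -
  define n where "n = card B"
  have "(A ^^ k) v \<in> U" for k
    by (rule funpow_in_invariant[OF U(2) v(1)])
  moreover obtain T where T: "finite T" "card T \<le> n" "supported_on B \<subseteq> FS.span T"
    using supported_on_finite_span[OF finite_B] unfolding n_def .
  ultimately have "(A ^^ k) v \<in> FS.span T" for k
    using U(3) by blast
  then obtain c where c: "\<exists>k\<le>n. c k \<noteq> 0" "(\<Sum>k\<le>n. fscale (c k) ((A ^^ k) v)) = 0"
    using FS.family_dependent[OF T(1) _ T(2), where X="\<lambda>k. (A ^^ k) v"] by blast
  define p where "p = (\<Sum>k\<le>n. monom (c k) k)"
  have coeff_p: "coeff p k = (if k \<le> n then c k else 0)" for k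
    by (simp add: p_def coeff_sum)
  have "degree p \<le> n" using coeff_p by (intro degree_le) auto
  obtain k where "k \<le> n" "c k \<noteq> 0" using c(1) by blast
  then have "p \<noteq> 0" using coeff_p[of k] by auto
  then obtain M where M: "p = smult (lead_coeff p) (\<Prod>x\<in>#M. [:-x, 1:])"
    using alg_closed_imp_factorization by blast
  have "fscale (lead_coeff p) (poly_apply (\<Prod>x\<in>#M. [:-x, 1:]) v) = poly_apply p v"
    using arg_cong[OF M, of "\<lambda>r. poly_apply r v"] by (simp only: poly_apply_smult)
  also have "\<dots> = (\<Sum>k\<le>n. fscale (c k) ((A ^^ k) v))"
    unfolding poly_apply_upto[OF \<open>degree p \<le> n\<close>] by (intro sum.cong) (auto simp: coeff_p)
  finally have "poly_apply (\<Prod>x\<in>#M. [:-x, 1:]) v = 0"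
    using c(2) \<open>p \<noteq> 0\<close> by (simp add: fun_eq_iff)
  then show ?thesis using eigenvector_of_annihilating_product[OF U(1,2) v(1) _ v(2)] by blast
qed

lemma eigenvalue_real:
  assumes "u \<in> supported_on B" "u \<noteq> 0" "A u = fscale \<mu> u"
  shows "complex_of_real (Re \<mu>) = \<mu>"
proof -
  have "\<mu> * inner_on B u u = cnj \<mu> * inner_on B u u"
    using self_adjoint[OF assms(1,1)] by (simp add: assms(3) inner_on_scale_right inner_on_scale_left)
  moreover have "inner_on B u u \<noteq> 0"
    using sqnorm_on_pos[OF finite_B assms(1,2)] by (simp add: inner_on_self)
  ultimately have "\<mu> = cnj \<mu>" by simp
  then have "Im \<mu> = 0" using arg_cong[of _ _ Im] by (metis cnj.sel(2) neg_equal_zero)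
  then show ?thesis by (simp add: complex_eq_iff)
qed

definition orthonormal_eigenvectors :: "('a \<Rightarrow> complex) set \<Rightarrow> bool" where
  "orthonormal_eigenvectors S \<longleftrightarrow> finite S \<and> S \<subseteq> supported_on B \<and> (\<forall>s\<in>S. inner_on B s s = 1) \<and>
     (\<forall>s\<in>S. \<forall>t\<in>S. s \<noteq> t \<longrightarrow> inner_on B s t = 0) \<and> (\<forall>s\<in>S. \<exists>l::real. A s = fscale (of_real l) s)"

lemma orthonormal_sum_inner_right:
  assumes "orthonormal_eigenvectors S" "s0 \<in> S"
  shows "(\<Sum>s\<in>S. d s * inner_on B s0 s) = d s0"
proof -
  have "(\<Sum>s\<in>S. d s * inner_on B s0 s) = (\<Sum>s\<in>S. if s = s0 then d s0 else 0)"
    using assms unfolding orthonormal_eigenvectors_def by (intro sum.cong) auto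
  then show ?thesis using assms unfolding orthonormal_eigenvectors_def by simp
qed

lemma orthonormal_sum_inner_left:
  assumes "orthonormal_eigenvectors S" "s0 \<in> S"
  shows "(\<Sum>s\<in>S. d s * inner_on B s s0) = d s0"
proof -
  have "(\<Sum>s\<in>S. d s * inner_on B s s0) = (\<Sum>s\<in>S. if s = s0 then d s0 else 0)"
    using assms unfolding orthonormal_eigenvectors_def by (intro sum.cong) auto
  then show ?thesis using assms unfolding orthonormal_eigenvectors_def by simp
qed

lemma orthonormal_eigenvectors_independent:
  assumes S: "orthonormal_eigenvectors S"
  shows "FS.independent S"
proof
  assume "FS.dependent S"
  moreover have "finite S" using S unfolding orthonormal_eigenvectors_def by blast
  ultimately obtain u where u: "\<exists>s\<in>S. u s \<noteq> 0" "(\<Sum>s\<in>S. fscale (u s) s) = 0"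
    using FS.dependent_finite by blast
  have "u s0 = 0" if "s0 \<in> S" for s0
  proof -
    have "u s0 = inner_on B s0 (\<Sum>s\<in>S. fscale (u s) s)"
      by (simp add: inner_on_sum_right inner_on_scale_right orthonormal_sum_inner_right[OF S that])
    then show ?thesis using u(2) by simp
  qed
  then show False using u(1) by blast
qed

lemma sqnorm_on_expansion:
  assumes "orthonormal_eigenvectors S"
  shows "sqnorm_on B (\<Sum>s\<in>S. fscale (d s) s) = (\<Sum>s\<in>S. (cmod (d s))\<^sup>2)"
proof -
  have "complex_of_real (sqnorm_on B (\<Sum>s\<in>S. fscale (d s) s))
      = (\<Sum>s\<in>S. d s * (\<Sum>t\<in>S. cnj (d t) * inner_on B t s))"
    unfolding inner_on_self[symmetric]
    by (simp only: inner_on_sum_right inner_on_scale_right inner_on_sum_left inner_on_scale_left)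
  also have "\<dots> = (\<Sum>s\<in>S. cnj (d s) * d s)"
    by (intro sum.cong refl) (simp add: orthonormal_sum_inner_left[OF assms] mult.commute)
  also have "\<dots> = complex_of_real (\<Sum>s\<in>S. (cmod (d s))\<^sup>2)"
    by (simp add: cnj_mult_self)
  finally show ?thesis by (simp only: of_real_eq_iff)
qed

lemma orthogonal_complement_invariant:
  assumes S: "orthonormal_eigenvectors S" and g: "g \<in> supported_on B"
    and s: "s \<in> S" and perp: "inner_on B s g = 0"
  shows "inner_on B s (A g) = 0"
proof -
  obtain l where l: "A s = fscale (of_real l) s" and "s \<in> supported_on B"
    using S s unfolding orthonormal_eigenvectors_def by blast
  then have "inner_on B s (A g) = inner_on B (A s) g" using self_adjoint g by blast
  then show ?thesis using perp unfolding l by (simp add: inner_on_scale_left)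
qed

lemma normalize_eigenvector:
  assumes u: "u \<in> supported_on B" "u \<noteq> 0" "A u = fscale \<mu> u"
  defines "u' \<equiv> fscale (of_real (1 / sqrt (sqnorm_on B u))) u"
  shows "inner_on B u' u' = 1" "A u' = fscale (of_real (Re \<mu>)) u'"
proof -
  define \<nu> where "\<nu> = sqnorm_on B u"
  have "\<nu> > 0" using sqnorm_on_pos[OF finite_B u(1,2)] unfolding \<nu>_def .
  have "inner_on B u' u' = of_real (1 / sqrt \<nu>) * (of_real (1 / sqrt \<nu>) * inner_on B u u)"
    unfolding u'_def \<nu>_def inner_on_scale_left inner_on_scale_right by simp
  also have "\<dots> = of_real (1 / sqrt \<nu> * (1 / sqrt \<nu>) * \<nu>)"
    unfolding inner_on_self \<nu>_def by (simp only: of_real_mult mult.assoc)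
  also have "1 / sqrt \<nu> * (1 / sqrt \<nu>) * \<nu> = 1" using \<open>\<nu> > 0\<close> by (simp add: field_simps)
  finally show "inner_on B u' u' = 1" by (simp only: of_real_1)
  show "A u' = fscale (of_real (Re \<mu>)) u'"
    unfolding u'_def scale u(3) eigenvalue_real[OF u] by (simp add: fun_eq_iff)
qed

lemma orthonormal_eigenvectors_extend:
  assumes S: "orthonormal_eigenvectors S"
    and r: "r \<in> supported_on B" "r \<noteq> 0" "\<forall>s\<in>S. inner_on B s r = 0"
  obtains u where "u \<notin> S" "orthonormal_eigenvectors (insert u S)"
proof -
  define U where "U = {f \<in> supported_on B. \<forall>s\<in>S. inner_on B s f = 0}"
  have U: "FS.subspace U" "U \<subseteq> supported_on B" "r \<in> U"
    using r unfolding U_def FS.subspace_def by (auto simp: supported_on_def inner_on_add_right inner_on_scale_right)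
  have "A g \<in> U" if "g \<in> U" for g
  proof -
    have g: "g \<in> supported_on B" "\<forall>s\<in>S. inner_on B s g = 0" using \<open>g \<in> U\<close> unfolding U_def by auto
    then have "\<forall>s\<in>S. inner_on B s (A g) = 0" using orthogonal_complement_invariant[OF S g(1)] by simp
    then show ?thesis by (simp add: U_def range_supported)
  qed
  then obtain u \<mu> where u: "u \<in> U" "u \<noteq> 0" "A u = fscale \<mu> u"
    using invariant_subspace_has_eigenvector[OF U(1) _ U(2,3) r(2)] by blast
  have "u \<in> supported_on B" using u(1) U(2) by blast
  define u' where "u' = fscale (of_real (1 / sqrt (sqnorm_on B u))) u"
  have u'_norm: "inner_on B u' u' = 1" and u'_eig: "A u' = fscale (of_real (Re \<mu>)) u'"
    unfolding u'_def by (rule normalize_eigenvector[OF \<open>u \<in> supported_on B\<close> u(2,3)])+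
  have u'_U: "u' \<in> U" unfolding u'_def by (rule FS.subspace_scale[OF U(1) u(1)])
  have u'_perp: "inner_on B s u' = 0" "inner_on B u' s = 0" if "s \<in> S" for s
    using u'_U that cnj_inner_on[of B s u'] unfolding U_def by auto
  have "u' \<notin> S"
  proof
    assume "u' \<in> S"
    then have "inner_on B u' u' = 0" using u'_perp by blast
    then show False using u'_norm by simp
  qed
  moreover have "orthonormal_eigenvectors (insert u' S)"
    unfolding orthonormal_eigenvectors_def
  proof (intro conjI ballI impI)
    show "finite (insert u' S)" "insert u' S \<subseteq> supported_on B"
      using S u'_U unfolding orthonormal_eigenvectors_def U_def by auto
    show "inner_on B s s = 1" if "s \<in> insert u' S" for s
      using that u'_norm S unfolding orthonormal_eigenvectors_def by auto
    show "\<exists>l::real. A s = fscale (of_real l) s" if "s \<in> insert u' S" for s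
      using that u'_eig S unfolding orthonormal_eigenvectors_def by auto
    show "inner_on B s t = 0" if "s \<in> insert u' S" "t \<in> insert u' S" "s \<noteq> t" for s t
      using that u'_perp S unfolding orthonormal_eigenvectors_def by auto
  qed
  ultimately show ?thesis using that by blast
qed

text \<open>A maximal orthonormal system of eigenvectors is complete: otherwise the orthogonal
  complement of its span would be a nonzero invariant subspace, containing a further eigenvector.\<close>

lemma orthonormal_eigenbasis_exists:
  obtains S where "orthonormal_eigenvectors S"
    "\<And>w. w \<in> supported_on B \<Longrightarrow> w = (\<Sum>s\<in>S. fscale (inner_on B s w) s)"
proof -
  have "orthonormal_eigenvectors S \<Longrightarrow> card S < Suc (card B)" for S
    using independent_supported_on_card_le[OF finite_B orthonormal_eigenvectors_independent]
    unfolding orthonormal_eigenvectors_def by (simp add: less_Suc_eq_le)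
  moreover have "orthonormal_eigenvectors {}" by (simp add: orthonormal_eigenvectors_def)
  ultimately obtain S where S: "orthonormal_eigenvectors S"
    and max: "\<And>S'. orthonormal_eigenvectors S' \<Longrightarrow> card S' \<le> card S"
    using ex_has_greatest_nat[of orthonormal_eigenvectors "{}" card "Suc (card B)"] by blast
  have "w = (\<Sum>s\<in>S. fscale (inner_on B s w) s)" if w: "w \<in> supported_on B" for w
  proof (rule ccontr)
    define r where "r = w - (\<Sum>s\<in>S. fscale (inner_on B s w) s)"
    assume "w \<noteq> (\<Sum>s\<in>S. fscale (inner_on B s w) s)"
    then have "r \<noteq> 0" unfolding r_def by simp
    moreover have "r \<in> supported_on B"
      using S w unfolding r_def orthonormal_eigenvectors_def
      by (intro FS.subspace_diff FS.subspace_sum FS.subspace_scale subspace_supported_on) auto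
    moreover have "inner_on B s r = 0" if "s \<in> S" for s
      unfolding r_def
      by (simp add: inner_on_diff_right inner_on_sum_right inner_on_scale_right
          orthonormal_sum_inner_right[OF S that])
    ultimately obtain u where "u \<notin> S" "orthonormal_eigenvectors (insert u S)"
      using orthonormal_eigenvectors_extend[OF S] by blast
    then show False
      using max[of "insert u S"] S unfolding orthonormal_eigenvectors_def by simp
  qed
  then show ?thesis using S that by blast
qed

lemma sqnorm_defect_gt:
  assumes S: "orthonormal_eigenvectors S"
    and lam: "\<And>s. s \<in> S \<Longrightarrow> A s = fscale (of_real (lam s)) s"
    and expansion: "w = (\<Sum>s\<in>S. fscale (c s) s)"
    and nonzero: "s0 \<in> S" "c s0 \<noteq> 0"
    and far: "\<And>s. s \<in> S \<Longrightarrow> c s \<noteq> 0 \<Longrightarrow> \<epsilon> < \<bar>lam s - E\<bar>" and "\<epsilon> \<ge> 0"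
  shows "\<epsilon>\<^sup>2 * sqnorm_on B w < sqnorm_on B (A w - fscale (of_real E) w)"
proof -
  have "A w - fscale (of_real E) w = (\<Sum>s\<in>S. fscale (c s * of_real (lam s) - c s * of_real E) s)"
  proof -
    have "A w = (\<Sum>s\<in>S. fscale (c s * of_real (lam s)) s)"
      unfolding expansion sum scale by (intro sum.cong refl) (simp add: lam fun_eq_iff)
    then show ?thesis
      unfolding expansion by (simp add: fun_eq_iff sum_fun_apply sum_subtractf sum_distrib_left algebra_simps)
  qed
  then have defect: "sqnorm_on B (A w - fscale (of_real E) w) = (\<Sum>s\<in>S. (cmod (c s))\<^sup>2 * (lam s - E)\<^sup>2)"
    by (simp add: sqnorm_on_expansion[OF S] norm_mult power_mult_distrib flip: right_diff_distrib of_real_diff)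
  have "\<epsilon>\<^sup>2 * sqnorm_on B w = (\<Sum>s\<in>S. (cmod (c s))\<^sup>2 * \<epsilon>\<^sup>2)"
    unfolding expansion sqnorm_on_expansion[OF S] by (simp add: sum_distrib_left mult.commute)
  also have "\<dots> < (\<Sum>s\<in>S. (cmod (c s))\<^sup>2 * (lam s - E)\<^sup>2)"
  proof (rule sum_strict_mono_ex1)
    show "finite S" using S unfolding orthonormal_eigenvectors_def by blast
    have far_sq: "\<epsilon>\<^sup>2 < (lam s - E)\<^sup>2" if "s \<in> S" "c s \<noteq> 0" for s
      using far[OF that] \<open>\<epsilon> \<ge> 0\<close> by (metis abs_le_square_iff abs_of_nonneg not_le)
    then show "\<forall>s\<in>S. (cmod (c s))\<^sup>2 * \<epsilon>\<^sup>2 \<le> (cmod (c s))\<^sup>2 * (lam s - E)\<^sup>2"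
      by (metis less_eq_real_def mult_left_mono mult_zero_left norm_eq_zero power_zero_numeral zero_le_power2)
    show "\<exists>s\<in>S. (cmod (c s))\<^sup>2 * \<epsilon>\<^sup>2 < (cmod (c s))\<^sup>2 * (lam s - E)\<^sup>2"
      using nonzero far_sq[OF nonzero] by (intro bexI[of _ s0] mult_strict_left_mono) auto
  qed
  finally show ?thesis unfolding defect .
qed

lemma card_eigenvalues_near_le_dim:
  assumes S: "orthonormal_eigenvectors S"
    and lam: "\<And>s. s \<in> S \<Longrightarrow> A s = fscale (of_real (lam s)) s"
  shows "card {s \<in> S. \<bar>lam s - E\<bar> \<le> \<epsilon>} \<le> FS.dim (FS.span {f. (\<forall>x. x \<notin> B \<longrightarrow> f x = 0) \<and> f \<noteq> 0 \<and>
             (\<exists>e\<in>{E - \<epsilon>..E + \<epsilon>}. A f = fscale (complex_of_real e) f)})"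
    (is "card ?K \<le> FS.dim (FS.span ?X)")
proof -
  define X where "X = ?X"
  have "?K \<subseteq> X"
  proof
    fix s assume s: "s \<in> ?K"
    then have "s \<in> supported_on B" "inner_on B s s = 1"
      using S unfolding orthonormal_eigenvectors_def by auto
    moreover from this(2) have "s \<noteq> 0" by (auto simp: inner_on_def)
    moreover have "lam s \<in> {E - \<epsilon>..E + \<epsilon>}" using s by auto
    ultimately show "s \<in> X"
      unfolding X_def using lam s
      by (intro CollectI conjI bexI[of _ "lam s"]) (auto simp: supported_on_def)
  qed
  have "X \<subseteq> supported_on B" unfolding X_def supported_on_def by blast
  obtain T where T: "finite T" "supported_on B \<subseteq> FS.span T"
    using supported_on_finite_span[OF finite_B] by blast
  have "FS.span X \<subseteq> FS.span T"
    using FS.span_minimal[OF order_trans[OF \<open>X \<subseteq> supported_on B\<close> T(2)] FS.subspace_span] .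
  moreover have "FS.independent ?K"
    by (rule FS.independent_mono[OF orthonormal_eigenvectors_independent[OF S]]) auto
  moreover have "?K \<subseteq> FS.span X"
    by (rule order_trans[OF \<open>?K \<subseteq> X\<close> FS.span_superset])
  ultimately have "card ?K \<le> FS.dim (FS.span X)"
    by (rule FS.card_le_dim_of_finite_span[OF T(1)])
  then show ?thesis unfolding X_def .
qed

text \<open>If at most one basis eigenvector had its eigenvalue in [E - \<epsilon>, E + \<epsilon>], some nonzero w in
  the plane spanned by \<psi>1, \<psi>2 would be orthogonal to it, and the eigenbasis expansion of w would
  give ||(A - E) w|| > \<epsilon> ||w||.\<close>

lemma dim_eigenspace_ge_2:
  assumes psi: "\<psi>1 \<in> supported_on B" "\<psi>2 \<in> supported_on B" and "\<epsilon> \<ge> 0"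
    and indep: "\<forall>a b. fscale a \<psi>1 + fscale b \<psi>2 = 0 \<longrightarrow> a = 0 \<and> b = 0"
    and quasimode: "\<And>a b. sqnorm_on B (A (fscale a \<psi>1 + fscale b \<psi>2)
        - fscale (of_real E) (fscale a \<psi>1 + fscale b \<psi>2)) \<le> \<epsilon>\<^sup>2 * sqnorm_on B (fscale a \<psi>1 + fscale b \<psi>2)"
  shows "2 \<le> FS.dim (FS.span {f. (\<forall>x. x \<notin> B \<longrightarrow> f x = 0) \<and> f \<noteq> 0 \<and>
             (\<exists>e\<in>{E - \<epsilon>..E + \<epsilon>}. A f = fscale (complex_of_real e) f)})"
proof (rule ccontr)
  obtain S where S: "orthonormal_eigenvectors S"
    and expand: "\<And>w. w \<in> supported_on B \<Longrightarrow> w = (\<Sum>s\<in>S. fscale (inner_on B s w) s)"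
    using orthonormal_eigenbasis_exists by metis
  have "\<forall>s\<in>S. \<exists>l::real. A s = fscale (of_real l) s"
    using S unfolding orthonormal_eigenvectors_def by blast
  then obtain lam where lam: "\<And>s. s \<in> S \<Longrightarrow> A s = fscale (of_real (lam s)) s"
    by metis
  define K where "K = {s \<in> S. \<bar>lam s - E\<bar> \<le> \<epsilon>}"
  assume "\<not> ?thesis"
  then have "card K \<le> 1"
    using card_eigenvalues_near_le_dim[OF S lam, of E \<epsilon>] unfolding K_def by linarith
  moreover have "finite K" using S unfolding K_def orthonormal_eigenvectors_def by simp
  ultimately obtain a b where ab: "a \<noteq> 0 \<or> b \<noteq> 0" "\<forall>k\<in>K. inner_on B k (fscale a \<psi>1 + fscale b \<psi>2) = 0"
    using exists_combination_orthogonal by blast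
  define w where "w = fscale a \<psi>1 + fscale b \<psi>2"
  have "w \<noteq> 0" using indep ab(1) unfolding w_def by blast
  have "w \<in> supported_on B" using psi unfolding w_def supported_on_def by simp
  then have w: "w = (\<Sum>s\<in>S. fscale (inner_on B s w) s)" by (rule expand)
  obtain s0 where s0: "s0 \<in> S" "inner_on B s0 w \<noteq> 0"
  proof (rule ccontr)
    assume "\<not> thesis"
    then have "(\<Sum>s\<in>S. fscale (inner_on B s w) s) = 0" using that by (intro sum.neutral) auto
    then show False using w \<open>w \<noteq> 0\<close> by simp
  qed
  have far: "\<epsilon> < \<bar>lam s - E\<bar>" if "s \<in> S" "inner_on B s w \<noteq> 0" for s
  proof (rule ccontr)
    assume "\<not> \<epsilon> < \<bar>lam s - E\<bar>"
    then have "s \<in> K" using that(1) unfolding K_def by simp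
    then show False using ab(2) that(2) unfolding w_def by blast
  qed
  have "\<epsilon>\<^sup>2 * sqnorm_on B w < sqnorm_on B (A w - fscale (of_real E) w)"
    by (rule sqnorm_defect_gt[OF S lam w s0 far \<open>\<epsilon> \<ge> 0\<close>])
  then show False using quasimode[of a b] unfolding w_def by simp
qed

end


section \<open>The lattice and its boxes\<close>

lemma finite_card_vec_set:
  assumes "finite S"
  shows "finite {x::int^'d. \<forall>i. x $ i \<in> S}" "card {x::int^'d. \<forall>i. x $ i \<in> S} \<le> card S ^ CARD('d)"
proof -
  have sub: "{x::int^'d. \<forall>i. x $ i \<in> S} \<subseteq> vec_lambda ` (PiE UNIV (\<lambda>_. S))"
  proof
    fix x :: "int^'d" assume "x \<in> {x. \<forall>i. x $ i \<in> S}"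
    then have "vec_nth x \<in> PiE UNIV (\<lambda>_. S)" by (auto simp: PiE_iff)
    then show "x \<in> vec_lambda ` (PiE UNIV (\<lambda>_. S))" by (metis image_eqI vec_nth_inverse)
  qed
  have fin: "finite (PiE (UNIV::'d set) (\<lambda>_. S))" using assms by (intro finite_PiE) auto
  then show "finite {x::int^'d. \<forall>i. x $ i \<in> S}" using sub finite_subset by blast
  have "card {x::int^'d. \<forall>i. x $ i \<in> S} \<le> card (vec_lambda ` (PiE (UNIV::'d set) (\<lambda>_. S)))"
    using sub fin by (intro card_mono) auto
  also have "\<dots> \<le> card (PiE (UNIV::'d set) (\<lambda>_. S))"
    using fin by (rule card_image_le)
  finally show "card {x::int^'d. \<forall>i. x $ i \<in> S} \<le> card S ^ CARD('d)"
    by (simp add: card_PiE)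
qed

lemma znorm_nonneg: "znorm x \<ge> 0"
  unfolding znorm_def by (simp add: sum_nonneg)

lemma abs_le_znorm: "\<bar>real_of_int (x $ i)\<bar> \<le> znorm x"
proof -
  have "(real_of_int (x $ i))\<^sup>2 \<le> (\<Sum>j\<in>UNIV. (real_of_int (x $ j))\<^sup>2)"
    by (rule member_le_sum) auto
  then show ?thesis unfolding znorm_def by (rule real_le_rsqrt[where x="\<bar>_\<bar>", simplified])
qed

lemma znorm_le_jbr: "znorm x \<le> jbr x"
  unfolding jbr_def using znorm_nonneg[of x] by (metis le_add_same_cancel2 real_sqrt_le_mono real_sqrt_unique zero_le_one)

lemma adj_sym: "adj x y \<longleftrightarrow> adj y x"
proof -
  have "znorm (x - y) = znorm (y - x)"
    unfolding znorm_def by (intro arg_cong[where f=sqrt] sum.cong refl) (simp add: power2_commute)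
  then show ?thesis by (simp add: adj_def)
qed

lemma finite_adj: "finite {y::int^'d. adj x y}"
proof -
  define T where "T = (\<Union>i. {x $ i - 1 .. x $ i + 1})"
  have "{y::int^'d. adj x y} \<subseteq> {y. \<forall>i. y $ i \<in> T}"
  proof (intro subsetI CollectI allI)
    fix y i assume "y \<in> {y. adj x y}"
    then have "\<bar>real_of_int ((x - y) $ i)\<bar> \<le> 1" using abs_le_znorm[of "x - y" i] by (simp add: adj_def)
    then have "\<bar>(x - y) $ i\<bar> \<le> 1" by (simp only: of_int_abs[symmetric] of_int_le_1_iff)
    then have "y $ i \<in> {x $ i - 1 .. x $ i + 1}" by (auto simp: abs_le_iff)
    then show "y $ i \<in> T" unfolding T_def by blast
  qed
  moreover have "finite T" unfolding T_def by simp
  ultimately show ?thesis using finite_card_vec_set(1) finite_subset by blast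
qed

definition neighbour_count :: "'d::finite itself \<Rightarrow> nat" where
  "neighbour_count _ = card {z::int^'d. znorm z = 1}"

lemma card_adj: "card {y::int^'d. adj x y} = neighbour_count TYPE('d)"
proof -
  have "{y::int^'d. adj x y} = (\<lambda>z. x - z) ` {z. znorm z = 1}"
  proof (intro set_eqI iffI)
    fix y assume "y \<in> {y. adj x y}"
    then show "y \<in> (\<lambda>z. x - z) ` {z. znorm z = 1}"
      by (intro image_eqI[of _ _ "x - y"]) (auto simp: adj_def)
  qed (auto simp: adj_def)
  moreover have "inj (\<lambda>z::int^'d. x - z)" by (intro injI) simp
  ultimately show ?thesis unfolding neighbour_count_def by (simp add: card_image inj_on_subset)
qed

lemma box_L_subset: "box_L L \<subseteq> {x::int^'d. \<forall>i. x $ i \<in> {-\<lceil>L\<rceil>..\<lceil>L\<rceil>}}"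
proof clarify
  fix x :: "int^'d" and i assume "x \<in> box_L L"
  then have "2 * \<bar>real_of_int (x $ i)\<bar> < L" unfolding box_L_def by blast
  then have "\<bar>real_of_int (x $ i)\<bar> < real_of_int \<lceil>L\<rceil>" using le_of_int_ceiling[of L] by linarith
  then have "\<bar>x $ i\<bar> < \<lceil>L\<rceil>" by (simp only: of_int_abs[symmetric] of_int_less_iff)
  then show "x $ i \<in> {-\<lceil>L\<rceil>..\<lceil>L\<rceil>}" by (auto simp: abs_less_iff)
qed

lemma finite_box_L: "finite (box_L L :: (int^'d) set)"
  using finite_card_vec_set(1)[of "{-\<lceil>L\<rceil>..\<lceil>L\<rceil>}"] box_L_subset finite_subset by blast

lemma card_box_L_le:
  assumes "L \<ge> 1"
  shows "real (card (box_L L :: (int^'d) set)) \<le> (5 * L) ^ CARD('d)"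
proof -
  have "card (box_L L :: (int^'d) set) \<le> card {-\<lceil>L\<rceil>..\<lceil>L\<rceil>} ^ CARD('d)"
    using card_mono[OF finite_card_vec_set(1) box_L_subset] finite_card_vec_set(2) by (meson finite_atLeastAtMost_int order_trans)
  then have "real (card (box_L L :: (int^'d) set)) \<le> real (card {-\<lceil>L\<rceil>..\<lceil>L\<rceil>}) ^ CARD('d)"
    by (metis of_nat_le_iff of_nat_power)
  also have "\<dots> \<le> (5 * L) ^ CARD('d)"
  proof (rule power_mono)
    have "real (card {-\<lceil>L\<rceil>..\<lceil>L\<rceil>}) = 2 * real_of_int \<lceil>L\<rceil> + 1"
      using assms by simp
    then show "real (card {-\<lceil>L\<rceil>..\<lceil>L\<rceil>}) \<le> 5 * L" using assms by linarith
  qed simp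
  finally show ?thesis .
qed

lemma eventually_in_box_L: "\<forall>\<^sub>F L in at_top. x \<in> box_L L"
  using eventually_gt_at_top[of "2 * znorm x"]
proof eventually_elim
  case (elim L)
  have "2 * \<bar>real_of_int (x $ i)\<bar> < L" for i using abs_le_znorm[of x i] elim by linarith
  then show ?case unfolding box_L_def by blast
qed

lemma jbr_ge_outside_box_L:
  assumes "y \<notin> box_L L"
  shows "L / 2 \<le> jbr y"
proof -
  obtain i where "L \<le> 2 * \<bar>real_of_int (y $ i)\<bar>" using assms unfolding box_L_def by (auto simp: not_less)
  then show ?thesis using abs_le_znorm[of y i] znorm_le_jbr[of y] by linarith
qed


section \<open>The truncated operator\<close>

lemma Hop_add: "Hop V (f + g) = Hop V f + Hop V g"
  by (simp add: Hop_def fun_eq_iff sum.distrib algebra_simps)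

lemma Hop_scale: "Hop V (fscale c f) = fscale c (Hop V f)"
  by (simp add: Hop_def fun_eq_iff sum_distrib_left algebra_simps)

lemma chi_add: "chi A (f + g) = chi A f + chi A g"
  by (simp add: chi_def fun_eq_iff)

lemma chi_scale: "chi A (fscale c f) = fscale c (chi A f)"
  by (simp add: chi_def fun_eq_iff)

lemma chi_in: "x \<in> A \<Longrightarrow> chi A f x = f x"
  by (simp add: chi_def)

lemma chi_idem: "chi A (chi A f) = chi A f"
  by (simp add: chi_def fun_eq_iff)

lemma chi_supported_on: "chi A f \<in> supported_on A"
  by (simp add: chi_def supported_on_def)

lemma chi_eq_self: "f \<in> supported_on A \<Longrightarrow> chi A f = f"
  by (auto simp: chi_def supported_on_def fun_eq_iff)

lemma sum_adj_supported_on: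
  assumes "finite A" "g \<in> supported_on A"
  shows "(\<Sum>y | adj x y. g y) = (\<Sum>y\<in>A. if adj x y then g y else 0)"
proof -
  have "(\<Sum>y | adj x y. g y) = (\<Sum>y\<in>{y. adj x y} \<inter> A. g y)"
    using assms(2) finite_adj[of x] by (intro sum.mono_neutral_right) (auto simp: supported_on_def)
  also have "\<dots> = (\<Sum>y\<in>A. if adj x y then g y else 0)"
    using sum.inter_restrict[OF assms(1), of g "{y. adj x y}"] by (simp add: Int_commute)
  finally show ?thesis .
qed

lemma inner_on_H_L:
  fixes f g :: "int^'d \<Rightarrow> complex"
  assumes f: "f \<in> supported_on (box_L L)" and g: "g \<in> supported_on (box_L L)"
  shows "inner_on (box_L L) f (H_L V L g) =
    (\<Sum>x\<in>box_L L. complex_of_real (V x) * cnj (f x) * g x) -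
    (\<Sum>x\<in>box_L L. \<Sum>y\<in>box_L L. if adj x y then cnj (f x) * g y else 0)"
proof -
  let ?B = "box_L L :: (int^'d) set"
  have "inner_on ?B f (H_L V L g) = (\<Sum>x\<in>?B. cnj (f x) * Hop V g x)"
    unfolding inner_on_def H_L_def chi_eq_self[OF g] by (intro sum.cong refl) (simp add: chi_def)
  also have "\<dots> = (\<Sum>x\<in>?B. complex_of_real (V x) * cnj (f x) * g x
                     - (\<Sum>y\<in>?B. if adj x y then cnj (f x) * g y else 0))"
    unfolding Hop_def sum_adj_supported_on[OF finite_box_L g]
    by (intro sum.cong refl) (simp add: algebra_simps sum_distrib_left if_distrib cong: if_cong)
  finally show ?thesis by (simp add: sum_subtractf)
qed

lemma hermitian_on_H_L: "hermitian_on (H_L V L) (box_L L)"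
proof unfold_locales
  show "H_L V L (f + g) = H_L V L f + H_L V L g" for f g
    by (simp only: H_L_def chi_add Hop_add)
  show "H_L V L (fscale c f) = fscale c (H_L V L f)" for c f
    by (simp only: H_L_def chi_scale Hop_scale)
  show "finite (box_L L)" by (rule finite_box_L)
  show "H_L V L f \<in> supported_on (box_L L)" for f
    unfolding H_L_def by (rule chi_supported_on)
  show "inner_on (box_L L) f (H_L V L g) = inner_on (box_L L) (H_L V L f) g"
    if f: "f \<in> supported_on (box_L L)" and g: "g \<in> supported_on (box_L L)" for f g
  proof -
    let ?B = "box_L L"
    have "cnj (\<Sum>x\<in>?B. \<Sum>y\<in>?B. if adj x y then cnj (g x) * f y else 0)
        = (\<Sum>x\<in>?B. \<Sum>y\<in>?B. if adj y x then g y * cnj (f x) else 0)"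
      by (subst sum.swap) (simp add: if_distrib cong: if_cong)
    also have "\<dots> = (\<Sum>x\<in>?B. \<Sum>y\<in>?B. if adj x y then cnj (f x) * g y else 0)"
      by (intro sum.cong refl) (simp add: adj_sym mult.commute)
    finally have hopping: "cnj (\<Sum>x\<in>?B. \<Sum>y\<in>?B. if adj x y then cnj (g x) * f y else 0)
        = (\<Sum>x\<in>?B. \<Sum>y\<in>?B. if adj x y then cnj (f x) * g y else 0)" .
    have "inner_on ?B (H_L V L f) g = cnj (inner_on ?B g (H_L V L f))"
      by (simp add: cnj_inner_on)
    also have "\<dots> = inner_on ?B f (H_L V L g)"
      unfolding inner_on_H_L[OF g f] inner_on_H_L[OF f g] complex_cnj_diff hopping
      by (simp add: mult.commute mult.left_commute)
    finally show ?thesis ..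
  qed
qed


lemma H_L_truncation_defect:
  assumes eig: "Hop V \<phi> = fscale (of_real E) \<phi>" and x: "x \<in> box_L L"
  shows "(H_L V L (chi (box_L L) \<phi>) - fscale (of_real E) (chi (box_L L) \<phi>)) x
       = (\<Sum>y | adj x y. \<phi> y - chi (box_L L) \<phi> y)"
proof -
  have "H_L V L (chi (box_L L) \<phi>) x = - (\<Sum>y | adj x y. chi (box_L L) \<phi> y) + of_real (V x) * \<phi> x"
    using x unfolding H_L_def chi_idem by (simp add: chi_in Hop_def)
  moreover have "of_real E * \<phi> x = - (\<Sum>y | adj x y. \<phi> y) + of_real (V x) * \<phi> x"
    using fun_cong[OF eig, of x] by (simp add: Hop_def)
  ultimately show ?thesis using x by (simp add: chi_in sum_subtractf)
qed

lemma box_volume_decay_eq: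
  assumes "L > 0"
  shows "(5 * L) ^ n * ((L / 2) powr (- \<beta>))\<^sup>2 = (5 powr (real n / 2) * 2 powr \<beta> * L powr (- \<beta> + real n / 2))\<^sup>2"
proof -
  have "(5 * L) ^ n = exp (real n * (ln 5 + ln L))"
    using assms by (simp add: powr_realpow[symmetric] powr_def ln_mult exp_add[symmetric] distrib_left)
  moreover have "((L / 2) powr (- \<beta>))\<^sup>2 = exp (2 * (- \<beta> * (ln L - ln 2)))"
    using assms by (simp add: powr_def ln_div power2_eq_square exp_add[symmetric])
  moreover have "(5 powr (real n / 2) * 2 powr \<beta> * L powr (- \<beta> + real n / 2))\<^sup>2
      = exp (2 * (real n / 2 * ln 5 + \<beta> * ln 2 + (- \<beta> + real n / 2) * ln L))"
    using assms by (simp add: powr_def power2_eq_square exp_add[symmetric] algebra_simps)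
  ultimately show ?thesis by (simp add: exp_add[symmetric] algebra_simps)
qed

lemma sqnorm_truncation_defect_le:
  fixes \<phi> :: "int^'d \<Rightarrow> complex"
  assumes eig: "Hop V \<phi> = fscale (of_real E) \<phi>"
    and decay: "\<And>y. cmod (\<phi> y) \<le> M * jbr y powr (- \<beta>)" and "M \<ge> 0" "\<beta> \<ge> 0" "L \<ge> 1"
  shows "sqnorm_on (box_L L) (H_L V L (chi (box_L L) \<phi>) - fscale (of_real E) (chi (box_L L) \<phi>))
     \<le> (real (neighbour_count TYPE('d)) * 5 powr (real CARD('d) / 2) * 2 powr \<beta> * M
         * L powr (- \<beta> + real CARD('d) / 2))\<^sup>2"
proof -
  let ?B = "box_L L :: (int^'d) set"
  define Q where "Q = real (neighbour_count TYPE('d)) * M * (L / 2) powr (- \<beta>)"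
  have outside: "cmod (\<phi> y - chi ?B \<phi> y) \<le> M * (L / 2) powr (- \<beta>)" for y
  proof (cases "y \<in> ?B")
    case False
    then have "jbr y powr (- \<beta>) \<le> (L / 2) powr (- \<beta>)"
      using jbr_ge_outside_box_L \<open>L \<ge> 1\<close> \<open>\<beta> \<ge> 0\<close> by (intro powr_mono2') auto
    then show ?thesis
      using False decay[of y] \<open>M \<ge> 0\<close> by (simp add: chi_def) (meson mult_left_mono order_trans)
  qed (use \<open>M \<ge> 0\<close> in \<open>simp add: chi_def\<close>)
  have pointwise: "cmod ((H_L V L (chi ?B \<phi>) - fscale (of_real E) (chi ?B \<phi>)) x) \<le> Q" if "x \<in> ?B" for x
  proof -
    have "cmod ((H_L V L (chi ?B \<phi>) - fscale (of_real E) (chi ?B \<phi>)) x)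
        \<le> (\<Sum>y | adj x y. cmod (\<phi> y - chi ?B \<phi> y))"
      unfolding H_L_truncation_defect[OF eig that] by (rule norm_sum)
    also have "\<dots> \<le> (\<Sum>y | adj x y. M * (L / 2) powr (- \<beta>))"
      by (rule sum_mono) (rule outside)
    also have "\<dots> = Q" unfolding Q_def by (simp add: card_adj)
    finally show ?thesis .
  qed
  have "sqnorm_on ?B (H_L V L (chi ?B \<phi>) - fscale (of_real E) (chi ?B \<phi>)) \<le> (\<Sum>x\<in>?B. Q\<^sup>2)"
    unfolding sqnorm_on_def using pointwise by (intro sum_mono power_mono) auto
  also have "\<dots> \<le> (5 * L) ^ CARD('d) * Q\<^sup>2"
    using card_box_L_le[OF \<open>L \<ge> 1\<close>, where 'd='d] by (simp add: mult_right_mono)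
  also have "\<dots> = (real (neighbour_count TYPE('d)) * M)\<^sup>2 * ((5 * L) ^ CARD('d) * ((L / 2) powr (- \<beta>))\<^sup>2)"
    unfolding Q_def by (simp add: power_mult_distrib)
  also have "\<dots> = (real (neighbour_count TYPE('d)) * M)\<^sup>2
      * (5 powr (real CARD('d) / 2) * 2 powr \<beta> * L powr (- \<beta> + real CARD('d) / 2))\<^sup>2"
    using \<open>L \<ge> 1\<close> by (subst box_volume_decay_eq) auto
  also have "\<dots> = (real (neighbour_count TYPE('d)) * 5 powr (real CARD('d) / 2) * 2 powr \<beta> * M
         * L powr (- \<beta> + real CARD('d) / 2))\<^sup>2"
    by (simp add: power_mult_distrib mult_ac)
  finally show ?thesis .
qed

lemma exists_points_det_nonzero:
  fixes \<phi>1 \<phi>2 :: "'a \<Rightarrow> complex"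
  assumes indep: "\<forall>a b :: complex. fscale a \<phi>1 + fscale b \<phi>2 = 0 \<longrightarrow> a = 0 \<and> b = 0"
  obtains p q where "\<phi>1 p * \<phi>2 q - \<phi>2 p * \<phi>1 q \<noteq> 0"
proof -
  have "\<phi>1 \<noteq> 0" using indep[rule_format, of 1 0] by auto
  then obtain p where p: "\<phi>1 p \<noteq> 0" by (auto simp: fun_eq_iff)
  have "fscale (\<phi>2 p) \<phi>1 + fscale (- \<phi>1 p) \<phi>2 \<noteq> 0" using indep[rule_format, of "\<phi>2 p" "- \<phi>1 p"] p by auto
  then obtain q where "\<phi>2 p * \<phi>1 q - \<phi>1 p * \<phi>2 q \<noteq> 0" by (auto simp: fun_eq_iff)
  then show ?thesis using that[of p q] by (simp add: algebra_simps)
qed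

text \<open>Cramer's rule for the values of a \<phi>1 + b \<phi>2 at p and q.\<close>

lemma coefficients_le_sqnorm_on:
  fixes \<phi>1 \<phi>2 :: "'a \<Rightarrow> complex"
  assumes "finite B" "p \<in> B" "q \<in> B" and D: "\<phi>1 p * \<phi>2 q - \<phi>2 p * \<phi>1 q \<noteq> 0"
  shows "cmod a + cmod b \<le> (cmod (\<phi>1 p) + cmod (\<phi>1 q) + cmod (\<phi>2 p) + cmod (\<phi>2 q))
          / cmod (\<phi>1 p * \<phi>2 q - \<phi>2 p * \<phi>1 q) * sqrt (sqnorm_on B (chi B (fscale a \<phi>1 + fscale b \<phi>2)))"
proof -
  define s where "s = sqrt (sqnorm_on B (chi B (fscale a \<phi>1 + fscale b \<phi>2)))"
  define D where "D = \<phi>1 p * \<phi>2 q - \<phi>2 p * \<phi>1 q"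
  define u where "u x = a * \<phi>1 x + b * \<phi>2 x" for x
  have u: "cmod (u x) \<le> s" if "x \<in> B" for x
  proof -
    have "(cmod (u x))\<^sup>2 = (cmod (chi B (fscale a \<phi>1 + fscale b \<phi>2) x))\<^sup>2"
      using that by (simp add: chi_in u_def)
    also have "\<dots> \<le> sqnorm_on B (chi B (fscale a \<phi>1 + fscale b \<phi>2))"
      unfolding sqnorm_on_def by (rule member_le_sum) (use assms(1) that in auto)
    finally show ?thesis unfolding s_def by (rule real_le_rsqrt)
  qed
  have "cmod a * cmod D = cmod (\<phi>2 q * u p - \<phi>2 p * u q)"
    unfolding D_def u_def by (simp flip: norm_mult add: algebra_simps)
  also have "\<dots> \<le> cmod (\<phi>2 q) * s + cmod (\<phi>2 p) * s"
    using u assms(2,3) norm_triangle_ineq4[of "\<phi>2 q * u p" "\<phi>2 p * u q"]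
    by (smt (verit) mult_left_mono norm_ge_zero norm_mult)
  finally have a: "cmod a * cmod D \<le> cmod (\<phi>2 q) * s + cmod (\<phi>2 p) * s" .
  have "cmod b * cmod D = cmod (\<phi>1 p * u q - \<phi>1 q * u p)"
    unfolding D_def u_def by (simp flip: norm_mult add: algebra_simps)
  also have "\<dots> \<le> cmod (\<phi>1 p) * s + cmod (\<phi>1 q) * s"
    using u assms(2,3) norm_triangle_ineq4[of "\<phi>1 p * u q" "\<phi>1 q * u p"]
    by (smt (verit) mult_left_mono norm_ge_zero norm_mult)
  finally have b: "cmod b * cmod D \<le> cmod (\<phi>1 p) * s + cmod (\<phi>1 q) * s" .
  have "cmod D > 0" using D unfolding D_def by simp
  with a b show ?thesis unfolding D_def[symmetric] s_def[symmetric]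
    by (simp add: field_simps)
qed


lemma has_decay_common_constant:
  fixes \<phi>1 \<phi>2 :: "int ^ 'd \<Rightarrow> complex"
  assumes "has_decay \<beta> \<phi>1" "has_decay \<beta> \<phi>2"
  obtains M where "M \<ge> 0" "\<And>x. cmod (\<phi>1 x) \<le> M * jbr x powr (- \<beta>)"
    "\<And>x. cmod (\<phi>2 x) \<le> M * jbr x powr (- \<beta>)"
proof -
  obtain C1 C2 where C: "\<And>x. cmod (\<phi>1 x) \<le> C1 * jbr x powr (- \<beta>)" "\<And>x. cmod (\<phi>2 x) \<le> C2 * jbr x powr (- \<beta>)"
    using assms unfolding has_decay_def by blast
  define M where "M = max (max C1 C2) 0"
  have "C1 \<le> M" "C2 \<le> M" "M \<ge> 0" unfolding M_def by auto
  have "cmod (\<phi>1 x) \<le> M * jbr x powr (- \<beta>)" "cmod (\<phi>2 x) \<le> M * jbr x powr (- \<beta>)" for x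
    using C[of x] mult_right_mono[OF \<open>C1 \<le> M\<close> powr_ge_zero] mult_right_mono[OF \<open>C2 \<le> M\<close> powr_ge_zero]
    by (meson order_trans)+
  with \<open>M \<ge> 0\<close> show ?thesis by (rule that)
qed

lemma sqnorm_truncated_combination_defect_le:
  fixes \<phi>1 \<phi>2 :: "int ^ 'd \<Rightarrow> complex" and a b :: complex
  assumes eig: "Hop V \<phi>1 = fscale (of_real E) \<phi>1" "Hop V \<phi>2 = fscale (of_real E) \<phi>2"
    and decay: "\<And>x. cmod (\<phi>1 x) \<le> M * jbr x powr (- \<beta>)" "\<And>x. cmod (\<phi>2 x) \<le> M * jbr x powr (- \<beta>)"
    and "M \<ge> 0" "\<beta> \<ge> 0" "L \<ge> 1"
    and pq: "p \<in> box_L L" "q \<in> box_L L" and D: "\<phi>1 p * \<phi>2 q - \<phi>2 p * \<phi>1 q \<noteq> 0"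
  defines "K \<equiv> (cmod (\<phi>1 p) + cmod (\<phi>1 q) + cmod (\<phi>2 p) + cmod (\<phi>2 q)) / cmod (\<phi>1 p * \<phi>2 q - \<phi>2 p * \<phi>1 q)"
    and "N \<equiv> real (neighbour_count TYPE('d)) * 5 powr (real CARD('d) / 2) * 2 powr \<beta>"
    and "P \<equiv> L powr (- \<beta> + real CARD('d) / 2)"
    and "w \<equiv> chi (box_L L) (fscale a \<phi>1 + fscale b \<phi>2)"
  shows "sqnorm_on (box_L L) (H_L V L w - fscale (of_real E) w) \<le> (N * K * M * P)\<^sup>2 * sqnorm_on (box_L L) w"
proof -
  define \<phi> where "\<phi> = fscale a \<phi>1 + fscale b \<phi>2"
  have "N \<ge> 0" "P \<ge> 0" unfolding N_def P_def by simp_all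
  have eig_\<phi>: "Hop V \<phi> = fscale (of_real E) \<phi>"
    unfolding \<phi>_def Hop_add Hop_scale eig by (simp add: fun_eq_iff algebra_simps)
  have decay_\<phi>: "cmod (\<phi> y) \<le> ((cmod a + cmod b) * M) * jbr y powr (- \<beta>)" for y
  proof -
    have "cmod (\<phi> y) \<le> cmod a * cmod (\<phi>1 y) + cmod b * cmod (\<phi>2 y)"
      unfolding \<phi>_def by (simp add: norm_mult[symmetric] norm_triangle_ineq)
    also have "\<dots> \<le> cmod a * (M * jbr y powr (- \<beta>)) + cmod b * (M * jbr y powr (- \<beta>))"
      using decay by (intro add_mono mult_left_mono) auto
    finally show ?thesis by (simp add: algebra_simps)
  qed
  have "(cmod a + cmod b) * M \<ge> 0" using \<open>M \<ge> 0\<close> by simp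
  then have "sqnorm_on (box_L L) (H_L V L w - fscale (of_real E) w) \<le> (N * ((cmod a + cmod b) * M) * P)\<^sup>2"
    unfolding N_def P_def w_def \<phi>_def[symmetric]
    by (rule sqnorm_truncation_defect_le[OF eig_\<phi> decay_\<phi> _ \<open>\<beta> \<ge> 0\<close> \<open>L \<ge> 1\<close>])
  also have "\<dots> \<le> (N * (K * sqrt (sqnorm_on (box_L L) w) * M) * P)\<^sup>2"
  proof (rule power_mono)
    have "(cmod a + cmod b) * M \<le> K * sqrt (sqnorm_on (box_L L) w) * M"
      using mult_right_mono[OF coefficients_le_sqnorm_on[OF finite_box_L pq D] \<open>M \<ge> 0\<close>]
      unfolding K_def w_def .
    then show "N * ((cmod a + cmod b) * M) * P \<le> N * (K * sqrt (sqnorm_on (box_L L) w) * M) * P"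
      using mult_right_mono[OF mult_left_mono[OF _ \<open>N \<ge> 0\<close>] \<open>P \<ge> 0\<close>] by blast
    show "0 \<le> N * ((cmod a + cmod b) * M) * P" using \<open>N \<ge> 0\<close> \<open>P \<ge> 0\<close> \<open>M \<ge> 0\<close> by simp
  qed
  also have "\<dots> = (N * K * M * P)\<^sup>2 * (sqrt (sqnorm_on (box_L L) w))\<^sup>2"
    by algebra
  also have "\<dots> = (N * K * M * P)\<^sup>2 * sqnorm_on (box_L L) w"
    using sqnorm_on_nonneg[of "box_L L" w] by simp
  finally show ?thesis .
qed

lemma tr_spec_proj_ge_2:
  fixes \<phi>1 \<phi>2 :: "int ^ 'd \<Rightarrow> complex"
  assumes eig: "Hop V \<phi>1 = fscale (of_real E) \<phi>1" "Hop V \<phi>2 = fscale (of_real E) \<phi>2"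
    and decay: "\<And>x. cmod (\<phi>1 x) \<le> M * jbr x powr (- \<beta>)" "\<And>x. cmod (\<phi>2 x) \<le> M * jbr x powr (- \<beta>)"
    and "M \<ge> 0" "\<beta> \<ge> 0" "L \<ge> 1"
    and pq: "p \<in> box_L L" "q \<in> box_L L" and D: "\<phi>1 p * \<phi>2 q - \<phi>2 p * \<phi>1 q \<noteq> 0"
  defines "C \<equiv> real (neighbour_count TYPE('d)) * 5 powr (real CARD('d) / 2) * 2 powr \<beta>
    * ((cmod (\<phi>1 p) + cmod (\<phi>1 q) + cmod (\<phi>2 p) + cmod (\<phi>2 q)) / cmod (\<phi>1 p * \<phi>2 q - \<phi>2 p * \<phi>1 q)) * M"
  shows "2 \<le> tr_spec_proj V L {E - C * L powr (- \<beta> + real CARD('d) / 2) .. E + C * L powr (- \<beta> + real CARD('d) / 2)}"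
proof -
  let ?B = "box_L L :: (int^'d) set"
  define \<epsilon> where "\<epsilon> = C * L powr (- \<beta> + real CARD('d) / 2)"
  interpret hermitian_on "H_L V L" ?B by (rule hermitian_on_H_L)
  have combination: "fscale a (chi ?B \<phi>1) + fscale b (chi ?B \<phi>2) = chi ?B (fscale a \<phi>1 + fscale b \<phi>2)" for a b
    by (simp only: chi_add chi_scale)
  have "2 \<le> FS.dim (FS.span {f. (\<forall>x. x \<notin> ?B \<longrightarrow> f x = 0) \<and> f \<noteq> 0 \<and>
             (\<exists>e\<in>{E - \<epsilon>..E + \<epsilon>}. H_L V L f = fscale (complex_of_real e) f)})"
  proof (rule dim_eigenspace_ge_2[OF chi_supported_on chi_supported_on])
    show "\<epsilon> \<ge> 0" unfolding \<epsilon>_def C_def using \<open>M \<ge> 0\<close> by simp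
    show "\<forall>a b. fscale a (chi ?B \<phi>1) + fscale b (chi ?B \<phi>2) = 0 \<longrightarrow> a = 0 \<and> b = 0"
      unfolding combination
    proof (intro allI impI)
      fix a b assume "chi ?B (fscale a \<phi>1 + fscale b \<phi>2) = 0"
      then have "cmod a + cmod b \<le> 0"
        using coefficients_le_sqnorm_on[OF finite_box_L pq D, of a b] by (simp add: sqnorm_on_def)
      then show "a = 0 \<and> b = 0" by (smt (verit) norm_ge_zero norm_le_zero_iff)
    qed
    show "sqnorm_on ?B (H_L V L (fscale a (chi ?B \<phi>1) + fscale b (chi ?B \<phi>2))
        - fscale (of_real E) (fscale a (chi ?B \<phi>1) + fscale b (chi ?B \<phi>2)))
        \<le> \<epsilon>\<^sup>2 * sqnorm_on ?B (fscale a (chi ?B \<phi>1) + fscale b (chi ?B \<phi>2))" for a b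
      unfolding combination \<epsilon>_def C_def
      using sqnorm_truncated_combination_defect_le[OF eig decay \<open>M \<ge> 0\<close> \<open>\<beta> \<ge> 0\<close> \<open>L \<ge> 1\<close> pq D]
      by (simp add: mult_ac)
  qed
  then show ?thesis unfolding tr_spec_proj_def \<epsilon>_def .
qed

theorem lemma1:
  fixes \<beta> :: real and \<phi>1 \<phi>2 :: "int ^ 'd \<Rightarrow> complex"
  assumes beta: "\<beta> > real CARD('d) / 2"
    and l2_1: "l2 \<phi>1" and l2_2: "l2 \<phi>2"
    and dec1: "has_decay \<beta> \<phi>1" and dec2: "has_decay \<beta> \<phi>2"
    and indep: "\<forall>a b :: complex. fscale a \<phi>1 + fscale b \<phi>2 = 0 \<longrightarrow> a = 0 \<and> b = 0"
  shows "\<exists>C :: real. \<forall>(V :: int ^ 'd \<Rightarrow> real) (E :: real).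
           Hop V \<phi>1 = fscale (complex_of_real E) \<phi>1 \<and> Hop V \<phi>2 = fscale (complex_of_real E) \<phi>2 \<longrightarrow>
           (\<forall>\<^sub>F L in at_top.
              tr_spec_proj V L {E - C * L powr (- \<beta> + real CARD('d) / 2) ..
                                E + C * L powr (- \<beta> + real CARD('d) / 2)} \<ge> 2)"
proof -
  obtain M where "M \<ge> 0" and M: "\<And>x. cmod (\<phi>1 x) \<le> M * jbr x powr (- \<beta>)"
    "\<And>x. cmod (\<phi>2 x) \<le> M * jbr x powr (- \<beta>)"
    using has_decay_common_constant[OF dec1 dec2] by blast
  obtain p q where D: "\<phi>1 p * \<phi>2 q - \<phi>2 p * \<phi>1 q \<noteq> 0"
    using exists_points_det_nonzero[OF indep] by blast
  have "\<beta> \<ge> 0" using beta divide_nonneg_nonneg[of "real CARD('d)" 2] by linarith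
  define C where "C = real (neighbour_count TYPE('d)) * 5 powr (real CARD('d) / 2) * 2 powr \<beta>
    * ((cmod (\<phi>1 p) + cmod (\<phi>1 q) + cmod (\<phi>2 p) + cmod (\<phi>2 q)) / cmod (\<phi>1 p * \<phi>2 q - \<phi>2 p * \<phi>1 q)) * M"
  show ?thesis
  proof (intro exI[of _ C] allI impI)
    fix V E assume "Hop V \<phi>1 = fscale (of_real E) \<phi>1 \<and> Hop V \<phi>2 = fscale (of_real E) \<phi>2"
    then have eig: "Hop V \<phi>1 = fscale (of_real E) \<phi>1" "Hop V \<phi>2 = fscale (of_real E) \<phi>2" by auto
    show "\<forall>\<^sub>F L in at_top. 2 \<le> tr_spec_proj V L
        {E - C * L powr (- \<beta> + real CARD('d) / 2) .. E + C * L powr (- \<beta> + real CARD('d) / 2)}"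
      using eventually_ge_at_top[of 1] eventually_in_box_L[of p] eventually_in_box_L[of q]
    proof eventually_elim
      case (elim L)
      show ?case unfolding C_def by (rule tr_spec_proj_ge_2[OF eig M \<open>M \<ge> 0\<close> \<open>\<beta> \<ge> 0\<close> elim D])
    qed
  qed
qed

end
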